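(* Let $n\ge 1$, $V=\{0,1\}^n$, $\mu$ the uniform probability measure on $V$, and $\beta=\log_2(3/2)$. For every $A\subseteq V$, \[ \int h_A^\beta\, d\mu \;\ge\; 2\,\mu(A)\bigl(1-\mu(A)\bigr). \]
   Context: $Q_n$ is the Hamming cube with vertex set $V=\{0,1\}^n$, two vertices adjacent iff they differ in exactly one coordinate. For $T\subseteq V$ and $x\in V$, $d_T(x)$ denotes the number of neighbors of $x$ in $T$. For $S\subseteq V$, $h_S:V\to\mathbb N$ is defined by $h_S(x)=d_{V\setminus S}(x)$ if $x\in S$ and $h_S(x)=0$ if $x\notin S$. For $f:V\to\mathbb R$ and $X\subseteq V$, $\int_X f\,d\mu=\sum_{x\in X}f(x)\mu(x)$ and $\int=\int_V$. Here $0^\beta=0$. *)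

theory Defs
  imports Complex_Main
begin

definition hcube :: "nat \<Rightarrow> bool list set" where
  "hcube n = {xs. length xs = n}"

definition hadj :: "bool list \<Rightarrow> bool list \<Rightarrow> bool" where
  "hadj x y \<longleftrightarrow> length x = length y \<and> card {i. i < length x \<and> x ! i \<noteq> y ! i} = 1"

definition hdeg :: "nat \<Rightarrow> bool list set \<Rightarrow> bool list \<Rightarrow> nat" where
  "hdeg n T x = card {y \<in> hcube n. hadj x y \<and> y \<in> T}"

definition hfun :: "nat \<Rightarrow> bool list set \<Rightarrow> bool list \<Rightarrow> nat" where
  "hfun n S x = (if x \<in> S then hdeg n (hcube n - S) x else 0)"

definition umeas :: "nat \<Rightarrow> bool list set \<Rightarrow> real" where
  "umeas n A = real (card A) / 2 ^ n"

definition uint :: "nat \<Rightarrow> (bool list \<Rightarrow> real) \<Rightarrow> real" where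
  "uint n f = (\<Sum>x\<in>hcube n. f x) / 2 ^ n"

end

theory Submission
  imports Defs "HOL-Analysis.Convex"
begin

text \<open>
  Write \<open>F(A) = \<Sum>x\<in>A. |N(x) - A|\<^sup>\<beta>\<close>, where \<open>N(x)\<close> is the neighbourhood of \<open>x\<close>; the
  claim is \<open>2 |A| (2\<^sup>n - |A|) \<le> 2\<^sup>n F(A)\<close>, proved by induction on \<open>n\<close>. Split \<open>A\<close> by its first coordinate into two sets \<open>A\<^sub>0, A\<^sub>1\<close> of the smaller
  cube and put \<open>B = A\<^sub>0 \<inter> A\<^sub>1\<close>, \<open>C = A\<^sub>0 \<union> A\<^sub>1\<close>. For every pair \<open>(\<alpha>, \<gamma>)\<close> with \<open>0 \<le> \<alpha> \<le> 1\<close> and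
  \<open>\<alpha> u\<^sup>\<beta> + \<gamma> \<le> (u + 1)\<^sup>\<beta>\<close> for all naturals \<open>u\<close>, concavity of \<open>t \<mapsto> t\<^sup>\<beta>\<close> gives, vertex by vertex
  of \<open>C\<close>, the bound \<open>F(A) \<ge> F(B) + \<alpha> F(C) + \<gamma> (|C| - |B|)\<close>. Together with the induction
  hypothesis for \<open>B\<close> and \<open>C\<close> it remains to choose \<open>(\<alpha>, \<gamma>)\<close> depending on the densities
  \<open>b \<le> c\<close> of \<open>B\<close> and \<open>C\<close> so that \<open>(b + c)(2 - b - c) \<le> 2b(1 - b) + 2\<alpha>c(1 - c) + \<gamma>(c - b)\<close>;
  the pairs \<open>(1, 0)\<close>, \<open>(1/2, 1)\<close>, \<open>(3/4, 3/4)\<close> and \<open>((2\<^sup>k - 1)/(2\<^sup>k - \<beta>), (3/4)\<^sup>k)\<close>, \<open>k \<ge> 2\<close>,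
  cover all cases. The value \<open>\<beta> = log\<^sub>2(3/2)\<close> enters through \<open>2\<^sup>\<beta> = 3/2\<close>.
\<close>

section \<open>Concavity of real powers\<close>

lemma powr_mult_powr_le_weighted_mean:
  fixes e a b :: real
  assumes "0 \<le> e" "e \<le> 1" "0 \<le> a" "0 \<le> b"
  shows "a powr e * b powr (1 - e) \<le> e * a + (1 - e) * b"
proof (cases "a = 0 \<or> b = 0")
  case True
  then show ?thesis using assms by auto
next
  case False
  then show ?thesis using Youngs_inequality_0[of e "1 - e" a b] assms by auto
qed

lemma powr_le_affine:
  fixes e a :: real
  assumes "0 \<le> e" "e \<le> 1" "0 \<le> a"
  shows "a powr e \<le> e * a + (1 - e)"
  using powr_mult_powr_le_weighted_mean[OF assms, of 1] by simp

lemma concave_on_powr: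
  fixes e :: real
  assumes e: "0 \<le> e" "e \<le> 1"
  shows "concave_on {0..} (\<lambda>x. x powr e)"
proof (rule concave_on_linorderI)
  fix t x y :: real
  assume t: "0 < t" "t < 1" and xy: "x \<in> {0..}" "y \<in> {0..}" "x < y"
  define z where "z = (1 - t) * x + t * y"
  have "0 < t * y" using t xy by (intro mult_pos_pos) auto
  then have z: "0 < z" using t xy unfolding z_def by (simp add: add_nonneg_pos)
  have "(1 - t) * (x / z) powr e + t * (y / z) powr e
      \<le> (1 - t) * (e * (x / z) + (1 - e)) + t * (e * (y / z) + (1 - e))"
    using powr_le_affine[OF e, of "x / z"] powr_le_affine[OF e, of "y / z"] t xy z
    by (intro add_mono mult_left_mono) auto
  also have "\<dots> = e * ((1 - t) * x + t * y) / z + (1 - e)" using z by (simp add: field_simps)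
  also have "\<dots> = 1" using z unfolding z_def[symmetric] by simp
  finally have le1: "(1 - t) * (x / z) powr e + t * (y / z) powr e \<le> 1" .
  have rescale: "z powr e * (w / z) powr e = w powr e" if "0 \<le> w" for w
    using that z by (simp add: powr_divide)
  have "0 \<le> z powr e" by simp
  from mult_left_mono[OF le1 this]
  have "(1 - t) * x powr e + t * y powr e \<le> z powr e"
    using xy by (simp add: distrib_left mult.left_commute rescale)
  then show "(1 - t) * x powr e + t * y powr e \<le> ((1 - t) *\<^sub>R x + t *\<^sub>R y) powr e"
    unfolding z_def by simp
qed simp

lemma powr_add_le_of_spread:
  fixes e p q r s :: real
  assumes "0 \<le> e" "e \<le> 1" "p + q = r + s" "0 \<le> s" "s \<le> p" "p \<le> r"
  shows "r powr e + s powr e \<le> p powr e + q powr e"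
proof (cases "r = s")
  case True
  then show ?thesis using assms by simp
next
  case False
  define t where "t = (p - s) / (r - s)"
  have t: "0 \<le> t" "t \<le> 1" unfolding t_def using assms False by (auto simp: field_simps)
  have "t * (r - s) = p - s" using False unfolding t_def by simp
  then have p: "p = (1 - t) * s + t * r" and q: "q = (1 - (1 - t)) * s + (1 - t) * r"
    using assms(3) by (simp_all add: algebra_simps)
  have "(1 - t) * s powr e + t * r powr e \<le> p powr e"
    using concave_onD[OF concave_on_powr, of e t s r] assms t p by simp
  moreover have "t * s powr e + (1 - t) * r powr e \<le> q powr e"
    using concave_onD[OF concave_on_powr, of e "1 - t" s r] assms t q by simp
  ultimately show ?thesis by (simp add: algebra_simps)
qed

lemma powr_mult_powr_superadditive:
  fixes e u s a b :: real
  assumes "0 \<le> e" "e \<le> 1" "0 \<le> u" "0 \<le> s" "0 < a" "0 < b"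
  shows "u powr e * s powr (1 - e) + a powr e * b powr (1 - e)
         \<le> (u + a) powr e * (s + b) powr (1 - e)"
proof -
  have "(u / (u + a)) powr e * (s / (s + b)) powr (1 - e)
        + (a / (u + a)) powr e * (b / (s + b)) powr (1 - e)
      \<le> (e * (u / (u + a)) + (1 - e) * (s / (s + b)))
        + (e * (a / (u + a)) + (1 - e) * (b / (s + b)))"
    using assms by (intro add_mono powr_mult_powr_le_weighted_mean) auto
  also have "\<dots> = e * ((u + a) / (u + a)) + (1 - e) * ((s + b) / (s + b))"
    unfolding add_divide_distrib by (simp add: ring_distribs)
  also have "\<dots> = 1" using assms by simp
  finally have le1: "(u / (u + a)) powr e * (s / (s + b)) powr (1 - e)
        + (a / (u + a)) powr e * (b / (s + b)) powr (1 - e) \<le> 1" .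
  have rescale: "(x / (u + a)) powr e * (y / (s + b)) powr (1 - e)
      * ((u + a) powr e * (s + b) powr (1 - e)) = x powr e * y powr (1 - e)"
    if "0 \<le> x" "0 \<le> y" for x y
    using that assms by (simp add: powr_divide)
  have "0 \<le> (u + a) powr e * (s + b) powr (1 - e)" by simp
  from mult_right_mono[OF le1 this] show ?thesis
    using assms by (simp add: distrib_right rescale)
qed

section \<open>Increment bounds for \<open>u \<mapsto> u\<^sup>\<beta>\<close>\<close>

definition \<beta> :: real where
  "\<beta> = log 2 (3/2)"

lemma two_powr_\<beta>: "2 powr \<beta> = 3/2"
  unfolding \<beta>_def by simp

lemma pow2_powr_\<beta>: "((2::real) ^ k) powr \<beta> = (3/2) ^ k"
proof -
  have "((2::real) ^ k) powr \<beta> = (2 powr \<beta>) ^ k"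
    by (simp add: powr_realpow[symmetric] powr_powr powr_power mult.commute)
  then show ?thesis by (simp add: two_powr_\<beta>)
qed

lemma \<beta>_less_1: "\<beta> < 1"
  unfolding \<beta>_def by (subst log_less_one_cancel_iff) auto

lemma \<beta>_lower_bound: "4/7 \<le> \<beta>"
proof -
  have "(2 powr (4/7 :: real)) ^ Suc 6 = 2 ^ 4"
    by (simp add: powr_realpow[symmetric] powr_powr)
  also have "\<dots> \<le> ((3/2) :: real) ^ Suc 6" by (simp add: power_divide)
  finally have "2 powr (4/7 :: real) \<le> 3/2"
    by (rule power_le_imp_le_base) simp_all
  then show ?thesis unfolding \<beta>_def by (subst le_log_iff) auto
qed

lemma \<beta>_pos: "0 < \<beta>"
  using \<beta>_lower_bound by simp

definition increment_bound :: "real \<Rightarrow> real \<Rightarrow> bool" where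
  "increment_bound \<alpha> \<gamma> \<longleftrightarrow> (\<forall>u::nat. \<alpha> * real u powr \<beta> + \<gamma> \<le> real (Suc u) powr \<beta>)"

lemma increment_boundD: "increment_bound \<alpha> \<gamma> \<Longrightarrow> \<alpha> * real u powr \<beta> + \<gamma> \<le> real (Suc u) powr \<beta>"
  unfolding increment_bound_def by blast

lemma increment_bound_mono:
  assumes "increment_bound \<alpha> \<gamma>" "\<alpha>' \<le> \<alpha>" "\<gamma>' \<le> \<gamma>"
  shows "increment_bound \<alpha>' \<gamma>'"
  unfolding increment_bound_def
proof
  fix u :: nat
  have "\<alpha>' * real u powr \<beta> \<le> \<alpha> * real u powr \<beta>"
    using assms(2) by (intro mult_right_mono) auto
  then show "\<alpha>' * real u powr \<beta> + \<gamma>' \<le> real (Suc u) powr \<beta>"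
    using increment_boundD[OF assms(1), of u] assms(3) by linarith
qed

lemma increment_bound_1_0: "increment_bound 1 0"
  unfolding increment_bound_def using \<beta>_pos by (simp add: powr_mono2)

lemma increment_bound_half_1: "increment_bound (1/2) 1"
  unfolding increment_bound_def
proof
  fix u :: nat
  have two: "2 powr \<beta> = 3/2" and four: "4 powr \<beta> = 9/4"
    using two_powr_\<beta> pow2_powr_\<beta>[of 2] by (simp_all add: power2_eq_square)
  have "(2 powr \<beta> + 4 powr \<beta>) / 2 \<le> 3 powr \<beta>"
    using concave_onD[OF concave_on_powr, of \<beta> "1/2" 2 4] \<beta>_pos \<beta>_less_1 by simp
  then have three: "15/8 \<le> 3 powr \<beta>" unfolding two four by simp
  have mono: "real a powr \<beta> \<le> real b powr \<beta>" if "a \<le> b" for a b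
    using that \<beta>_pos by (intro powr_mono2) auto
  consider "u = 0" | "u = 1" | "u = 2" | "u = 3" | "4 \<le> u" by linarith
  then show "1/2 * real u powr \<beta> + 1 \<le> real (Suc u) powr \<beta>"
  proof cases
    case 4
    have "3 powr \<beta> \<le> 4 powr \<beta>" using mono[of 3 4] by simp
    then show ?thesis using 4 four by simp
  next
    case 5
    have "4 powr \<beta> \<le> real u powr \<beta>" "real u powr \<beta> \<le> real (Suc u) powr \<beta>"
      using mono[of 4 u] mono[of u "Suc u"] 5 by simp_all
    then show ?thesis using four by simp
  qed (use two three in \<open>simp_all add: numeral_eq_Suc\<close>)
qed

lemma increment_bound_geometric:
  fixes s :: real
  assumes "0 \<le> s"
  shows "increment_bound (s powr (1 - \<beta>) / (s + 1) powr (1 - \<beta>)) (1 / (s + 1) powr (1 - \<beta>))"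
  unfolding increment_bound_def
proof
  fix u :: nat
  have "real u powr \<beta> * s powr (1 - \<beta>) + 1 \<le> real (Suc u) powr \<beta> * (s + 1) powr (1 - \<beta>)"
    using powr_mult_powr_superadditive[of \<beta> "real u" s 1 1] \<beta>_pos \<beta>_less_1 assms
    by (simp add: ac_simps)
  moreover have "0 < (s + 1) powr (1 - \<beta>)" using assms by simp
  ultimately show "s powr (1 - \<beta>) / (s + 1) powr (1 - \<beta>) * real u powr \<beta>
      + 1 / (s + 1) powr (1 - \<beta>) \<le> real (Suc u) powr \<beta>"
    by (simp add: field_simps)
qed

lemma increment_bound_3_4: "increment_bound (3/4) (3/4)"
proof -
  have "(2::real) powr (1 - \<beta>) = 4/3"
    by (simp add: powr_diff two_powr_\<beta>)
  with increment_bound_geometric[of 1] show ?thesis by simp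
qed

lemma increment_bound_pow:
  assumes "1 \<le> k"
  shows "increment_bound ((2^k - 1) / (2^k - \<beta>)) ((3/4) ^ k)"
proof -
  define s :: real where "s = 2^k - 1"
  define p where "p = 1 - \<beta>"
  have p: "0 \<le> p" "p \<le> 1" using \<beta>_pos \<beta>_less_1 unfolding p_def by auto
  have "(2::real) ^ 1 \<le> 2 ^ k" using assms by (intro power_increasing) auto
  then have s: "1 \<le> s" unfolding s_def by simp
  have "(s + 1) powr p = 2 ^ k / (3/2) ^ k"
    unfolding s_def p_def by (simp add: powr_diff pow2_powr_\<beta>)
  also have "\<dots> = (4/3) ^ k" by (simp add: power_divide power_mult_distrib[symmetric])
  finally have sp: "(s + 1) powr p = (4/3) ^ k" .
  text \<open>Bernoulli's inequality for the exponent \<open>p \<le> 1\<close>.\<close>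
  have "((s + 1) / s) powr p \<le> (s + p) / s"
    using powr_le_affine[OF p, of "(s + 1) / s"] s by (simp add: field_simps)
  then have "(s + 1) powr p \<le> s powr p * ((s + p) / s)"
    using s by (simp add: powr_divide field_simps)
  then have "s / (s + p) \<le> s powr p / (s + 1) powr p"
    using s p by (simp add: field_simps)
  moreover have "increment_bound (s powr p / (s + 1) powr p) ((3/4) ^ k)"
    using increment_bound_geometric[of s] s sp unfolding p_def by (simp add: power_divide)
  ultimately show ?thesis
    unfolding s_def p_def by (auto elim: increment_bound_mono simp: algebra_simps)
qed

section \<open>Choosing the increment bound\<close>

lemma ex_geometric_bracket:
  fixes d :: real
  assumes "0 < d" "d < 1/4"
  shows "\<exists>k\<ge>2. (3/4) ^ Suc k / 2 \<le> d \<and> d \<le> (3/4) ^ k / 2"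
proof -
  define P where "P j \<longleftrightarrow> (3/4::real) ^ Suc j / 2 \<le> d" for j
  obtain n where "(3/4::real) ^ n < 2 * d"
    using real_arch_pow_inv[of "2 * d" "3/4"] assms by auto
  moreover have "(3/4::real) ^ Suc n \<le> (3/4) ^ n" by (rule power_decreasing) auto
  ultimately have "P n" unfolding P_def by linarith
  define k where "k = (LEAST j. P j)"
  have "P k" unfolding k_def using \<open>P n\<close> by (rule LeastI)
  have "\<not> P 0" "\<not> P 1" using assms unfolding P_def by (auto simp: power2_eq_square)
  then have "k \<noteq> 0" "k \<noteq> 1" using \<open>P k\<close> by metis+
  then have "2 \<le> k" by presburger
  have "\<not> P (k - 1)" using not_less_Least[of "k - 1" P] \<open>2 \<le> k\<close> unfolding k_def by auto
  then have "d \<le> (3/4) ^ k / 2" unfolding P_def using \<open>2 \<le> k\<close> by (simp add: Suc_diff_1)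
  then show ?thesis using \<open>P k\<close> \<open>2 \<le> k\<close> unfolding P_def by auto
qed

lemma three_quarters_pow_sq_mult_ge:
  assumes "2 \<le> k"
  shows "243/256 \<le> ((3/4) ^ k)\<^sup>2 * (2 ^ k - 1 :: real)"
proof -
  have sq: "((3/4) ^ k)\<^sup>2 = (9/16 :: real) ^ k"
    by (simp add: power_mult_distrib[symmetric] power2_eq_square)
  then have "((3/4) ^ k)\<^sup>2 * 2 ^ k = (9/8 :: real) ^ k" by (simp flip: power_mult_distrib)
  then have "((3/4) ^ k)\<^sup>2 * (2 ^ k - 1) = (9/8 :: real) ^ k - (9/16) ^ k"
    using sq by (simp add: algebra_simps)
  moreover have "(9/8::real) ^ 2 \<le> (9/8) ^ k" "(9/16::real) ^ k \<le> (9/16) ^ 2"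
    using assms by (auto intro: power_increasing power_decreasing)
  ultimately show ?thesis by (simp add: power2_eq_square)
qed

lemma small_gap_increment_bound:
  fixes d K :: real
  assumes d: "0 < d" "d < 1/4" and K: "0 \<le> K" "K \<le> 1/2"
  shows "\<exists>\<alpha> \<gamma>. 0 \<le> \<alpha> \<and> \<alpha> \<le> 1 \<and> increment_bound \<alpha> \<gamma> \<and> d\<^sup>2 + (1 - \<alpha>) * K \<le> \<gamma> * d"
proof -
  obtain k where k: "2 \<le> k" "(3/4) ^ Suc k / 2 \<le> d" "d \<le> (3/4) ^ k / 2"
    using ex_geometric_bracket[OF d] by blast
  define s :: real where "s = 2^k - 1"
  define p where "p = 1 - \<beta>"
  define g :: real where "g = (3/4) ^ k"
  have p: "0 \<le> p" "p \<le> 3/7" using \<beta>_less_1 \<beta>_lower_bound unfolding p_def by auto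
  have g: "0 < g" "3 * g / 8 \<le> d" "d \<le> g / 2" using k unfolding g_def by auto
  have "(2::real) ^ 1 \<le> 2 ^ k" using k by (intro power_increasing) auto
  then have s: "1 \<le> s" unfolding s_def by simp
  have gap: "15 * g\<^sup>2 / 64 \<le> g * d - d\<^sup>2"
  proof -
    have "0 \<le> (d - 3 * g / 8) * (g / 2 - d)" using g by (intro mult_nonneg_nonneg) auto
    moreover have "(d - 3 * g / 8) * (g / 2 - d) = 7/8 * (g * d) - d\<^sup>2 - 3/16 * g\<^sup>2"
      by (simp add: field_simps power2_eq_square)
    moreover have "3/8 * g\<^sup>2 \<le> g * d"
      using g mult_left_mono[of "3 * g / 8" d g] by (simp add: power2_eq_square)
    ultimately show ?thesis by linarith
  qed
  have "243/256 \<le> g\<^sup>2 * s"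
    using three_quarters_pow_sq_mult_ge[OF k(1)] unfolding g_def s_def .
  moreover have "0 \<le> g\<^sup>2 * p" using p by simp
  text \<open>This is where the lower bound on \<open>\<beta>\<close> enters.\<close>
  ultimately have "p * 32 \<le> 15 * (g\<^sup>2 * (s + p))" using p
    unfolding distrib_left by linarith
  then have "p / (s + p) * (1/2) \<le> 15 * g\<^sup>2 / 64" using s p by (simp add: field_simps)
  moreover have "p / (s + p) * K \<le> p / (s + p) * (1/2)" using K s p by (intro mult_left_mono) auto
  ultimately have "p / (s + p) * K \<le> 15 * g\<^sup>2 / 64" by linarith
  moreover have one_minus: "1 - s / (s + p) = p / (s + p)" using s p by (simp add: field_simps)
  ultimately have "d\<^sup>2 + (1 - s / (s + p)) * K \<le> g * d" unfolding one_minus using gap by linarith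
  moreover have "increment_bound (s / (s + p)) g"
    using increment_bound_pow[of k] k unfolding s_def p_def g_def by (simp add: algebra_simps)
  moreover have "0 \<le> s / (s + p)" "s / (s + p) \<le> 1" using s p by auto
  ultimately show ?thesis by blast
qed

lemma ex_increment_bound:
  fixes d K :: real
  assumes "0 \<le> d" "0 \<le> K" "K \<le> 1/2" and "1/2 \<le> d \<Longrightarrow> K \<le> 2 * d * (1 - d)"
  shows "\<exists>\<alpha> \<gamma>. 0 \<le> \<alpha> \<and> \<alpha> \<le> 1 \<and> increment_bound \<alpha> \<gamma> \<and> d\<^sup>2 + (1 - \<alpha>) * K \<le> \<gamma> * d"
proof -
  consider "d = 0" | "K \<le> 2 * d * (1 - d)" | "1/4 \<le> d" "d < 1/2" | "0 < d" "d < 1/4"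
    using assms by linarith
  then show ?thesis
  proof cases
    case 1
    then have "0 \<le> (1::real) \<and> (1::real) \<le> 1 \<and> increment_bound 1 0 \<and> d\<^sup>2 + (1 - 1) * K \<le> 0 * d"
      using increment_bound_1_0 by simp
    then show ?thesis by blast
  next
    case 2
    then have "0 \<le> (1/2::real) \<and> (1/2::real) \<le> 1 \<and> increment_bound (1/2) 1
        \<and> d\<^sup>2 + (1 - 1/2) * K \<le> 1 * d"
      using increment_bound_half_1 by (simp add: power2_eq_square algebra_simps)
    then show ?thesis by blast
  next
    case 3
    then have "(d - 1/4) * (d - 1/2) \<le> 0" by (intro mult_nonneg_nonpos) auto
    then have "0 \<le> (3/4::real) \<and> (3/4::real) \<le> 1 \<and> increment_bound (3/4) (3/4)
        \<and> d\<^sup>2 + (1 - 3/4) * K \<le> 3/4 * d"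
      using assms increment_bound_3_4 by (simp add: power2_eq_square algebra_simps)
    then show ?thesis by blast
  next
    case 4
    then show ?thesis using small_gap_increment_bound assms by blast
  qed
qed

lemma ex_increment_bound_split:
  fixes x y M :: real
  assumes "0 \<le> x" "x \<le> y" "y \<le> M" and M: "0 < M"
  shows "\<exists>\<alpha> \<gamma>. 0 \<le> \<alpha> \<and> \<alpha> \<le> 1 \<and> increment_bound \<alpha> \<gamma> \<and>
    (x + y) * (2 * M - x - y) \<le> 2 * x * (M - x) + \<alpha> * (2 * y * (M - y)) + \<gamma> * M * (y - x)"
proof -
  define c where "c = y / M"
  define d where "d = (y - x) / M"
  have cd: "0 \<le> d" "d \<le> c" "c \<le> 1" unfolding c_def d_def using assms M by (auto simp: field_simps)
  have "0 \<le> (2 * c - 1)\<^sup>2" by simp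
  then have "2 * c * (1 - c) \<le> 1/2" by (simp add: power2_eq_square algebra_simps)
  moreover have "2 * c * (1 - c) \<le> 2 * d * (1 - d)" if "1/2 \<le> d"
  proof -
    have "0 \<le> (c - d) * (c + d - 1)" using that cd by (intro mult_nonneg_nonneg) auto
    then show ?thesis by (simp add: algebra_simps)
  qed
  moreover have "0 \<le> 2 * c * (1 - c)" using cd by simp
  ultimately obtain \<alpha> \<gamma> where \<alpha>: "0 \<le> \<alpha>" "\<alpha> \<le> 1" "increment_bound \<alpha> \<gamma>"
    and ineq: "d\<^sup>2 + (1 - \<alpha>) * (2 * c * (1 - c)) \<le> \<gamma> * d"
    using ex_increment_bound[of d "2 * c * (1 - c)"] cd by blast
  have scale_d: "M\<^sup>2 * d\<^sup>2 = (y - x)\<^sup>2" "M\<^sup>2 * (\<gamma> * d) = \<gamma> * M * (y - x)"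
    unfolding d_def using M by (simp_all add: power_divide power2_eq_square)
  have scale_c: "M\<^sup>2 * (2 * c * (1 - c)) = 2 * y * (M - y)"
    unfolding c_def using M by (simp add: field_simps power2_eq_square)
  have "(y - x)\<^sup>2 + (1 - \<alpha>) * (2 * y * (M - y)) = M\<^sup>2 * (d\<^sup>2 + (1 - \<alpha>) * (2 * c * (1 - c)))"
    unfolding scale_d(1)[symmetric] scale_c[symmetric] by (simp add: algebra_simps)
  also have "\<dots> \<le> \<gamma> * M * (y - x)"
    using mult_left_mono[OF ineq, of "M\<^sup>2"] unfolding scale_d(2) by simp
  finally have "(y - x)\<^sup>2 + (1 - \<alpha>) * (2 * y * (M - y)) \<le> \<gamma> * M * (y - x)" .
  then have "(x + y) * (2 * M - x - y) \<le> 2 * x * (M - x) + \<alpha> * (2 * y * (M - y)) + \<gamma> * M * (y - x)"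
    by (simp add: algebra_simps power2_eq_square)
  with \<alpha> show ?thesis by blast
qed

section \<open>Neighbourhoods in the Hamming cube\<close>

definition cube_nbrs :: "nat \<Rightarrow> bool list \<Rightarrow> bool list set" where
  "cube_nbrs n x = {y \<in> hcube n. hadj x y}"

definition boundary_moment :: "nat \<Rightarrow> bool list set \<Rightarrow> real" where
  "boundary_moment n A = (\<Sum>x\<in>A. real (card (cube_nbrs n x - A)) powr \<beta>)"

definition slice :: "bool \<Rightarrow> bool list set \<Rightarrow> bool list set" where
  "slice a A = Cons a -` A"

lemma finite_hcube: "finite (hcube n)"
  using finite_lists_length_eq[of "UNIV :: bool set" n] unfolding hcube_def by simp

lemma card_hcube: "card (hcube n) = 2 ^ n"
  using card_lists_length_eq[of "UNIV :: bool set" n] unfolding hcube_def by simp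

lemma finite_cube_nbrs: "finite (cube_nbrs n x)"
  unfolding cube_nbrs_def using finite_hcube by simp

lemma slice_subset_hcube: "A \<subseteq> hcube (Suc n) \<Longrightarrow> slice a A \<subseteq> hcube n"
  unfolding slice_def hcube_def by auto

lemma sum_split_head:
  assumes "finite A" "[] \<notin> A"
  shows "(\<Sum>z\<in>A. f z) = (\<Sum>x\<in>slice False A. f (False # x)) + (\<Sum>x\<in>slice True A. f (True # x))"
proof -
  have A: "A = Cons False ` slice False A \<union> Cons True ` slice True A"
  proof (rule set_eqI)
    fix z show "z \<in> A \<longleftrightarrow> z \<in> Cons False ` slice False A \<union> Cons True ` slice True A"
      using assms(2) unfolding slice_def by (cases z) (auto intro: image_eqI)
  qed
  have "finite (slice a A)" for a
    unfolding slice_def using assms(1) by (rule finite_vimageI) simp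
  then show ?thesis
    by (subst A, subst sum.union_disjoint) (auto simp: sum.reindex)
qed

lemma card_eq_card_slices:
  assumes "A \<subseteq> hcube (Suc n)"
  shows "card A = card (slice False A) + card (slice True A)"
proof -
  have "[] \<notin> A" "finite A" using assms finite_subset[OF _ finite_hcube] unfolding hcube_def by auto
  then show ?thesis using sum_split_head[of A "\<lambda>_. 1::nat"] by simp
qed

lemma hadj_Cons:
  assumes "length x = length y"
  shows "hadj (a # x) (b # y) \<longleftrightarrow> (a \<noteq> b \<and> x = y) \<or> (a = b \<and> hadj x y)"
proof -
  define D where "D = {j. j < length x \<and> x ! j \<noteq> y ! j}"
  have "{i. i < length (a # x) \<and> (a # x) ! i \<noteq> (b # y) ! i} = (if a \<noteq> b then {0} else {}) \<union> Suc ` D"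
  proof (rule set_eqI)
    fix i
    show "i \<in> {i. i < length (a # x) \<and> (a # x) ! i \<noteq> (b # y) ! i}
      \<longleftrightarrow> i \<in> (if a \<noteq> b then {0} else {}) \<union> Suc ` D"
      unfolding D_def by (cases i) auto
  qed
  then have "card {i. i < length (a # x) \<and> (a # x) ! i \<noteq> (b # y) ! i} = (if a \<noteq> b then 1 else 0) + card D"
    by (simp add: card_image D_def)
  moreover have "card D = 0 \<longleftrightarrow> x = y"
    unfolding D_def using assms by (auto simp: list_eq_iff_nth_eq)
  ultimately show ?thesis unfolding hadj_def D_def using assms by auto
qed

lemma cube_nbrs_Cons:
  assumes "length x = n"
  shows "cube_nbrs (Suc n) (a # x) = insert ((\<not> a) # x) (Cons a ` cube_nbrs n x)"
proof (rule set_eqI)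
  fix z
  show "z \<in> cube_nbrs (Suc n) (a # x) \<longleftrightarrow> z \<in> insert ((\<not> a) # x) (Cons a ` cube_nbrs n x)"
  proof (cases z)
    case (Cons b y)
    then show ?thesis using assms hadj_Cons[of x y a b] unfolding cube_nbrs_def hcube_def by auto
  qed (auto simp: cube_nbrs_def hcube_def)
qed

lemma card_cube_nbrs_Cons_diff:
  assumes "length x = n"
  shows "card (cube_nbrs (Suc n) (a # x) - A)
       = (if x \<in> slice (\<not> a) A then 0 else 1) + card (cube_nbrs n x - slice a A)"
proof -
  have "cube_nbrs (Suc n) (a # x) - A
      = (if x \<in> slice (\<not> a) A then {} else {(\<not> a) # x}) \<union> Cons a ` (cube_nbrs n x - slice a A)"
    unfolding cube_nbrs_Cons[OF assms] slice_def by auto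
  moreover have "card (Cons a ` (cube_nbrs n x - slice a A)) = card (cube_nbrs n x - slice a A)"
    by (rule card_image) simp
  ultimately show ?thesis using finite_cube_nbrs[of n x] by (auto simp: card_insert_if)
qed

section \<open>Induction on the dimension\<close>

lemma split_contribution_ge:
  fixes N A0 A1 :: "'a set" and x :: 'a
  assumes "finite N" "0 \<le> \<alpha>" "\<alpha> \<le> 1" "increment_bound \<alpha> \<gamma>" "x \<in> A0 \<union> A1"
  shows "(if x \<in> A0 \<inter> A1 then real (card (N - (A0 \<inter> A1))) powr \<beta> else 0)
           + \<alpha> * real (card (N - (A0 \<union> A1))) powr \<beta> + (if x \<in> A0 \<inter> A1 then 0 else \<gamma>)
         \<le> (if x \<in> A0 then real ((if x \<in> A1 then 0 else 1) + card (N - A0)) powr \<beta> else 0)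
           + (if x \<in> A1 then real ((if x \<in> A0 then 0 else 1) + card (N - A1)) powr \<beta> else 0)"
proof -
  define p0 where "p0 = card (N - A0)"
  define p1 where "p1 = card (N - A1)"
  define r where "r = card (N - (A0 \<inter> A1))"
  define s where "s = card (N - (A0 \<union> A1))"
  have "card ((N - A0) \<union> (N - A1)) + card ((N - A0) \<inter> (N - A1)) = p0 + p1"
    unfolding p0_def p1_def using card_Un_Int[of "N - A0" "N - A1"] assms(1) by simp
  moreover have "(N - A0) \<union> (N - A1) = N - (A0 \<inter> A1)" "(N - A0) \<inter> (N - A1) = N - (A0 \<union> A1)"
    by auto
  ultimately have sum: "p0 + p1 = r + s" unfolding r_def s_def by simp
  have order: "s \<le> p0" "p0 \<le> r" "s \<le> p1" "p1 \<le> r"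
    unfolding r_def s_def p0_def p1_def using assms(1) by (auto intro!: card_mono)
  have step: "\<alpha> * real s powr \<beta> + \<gamma> \<le> real (Suc p) powr \<beta>" if "s \<le> p" for p
  proof -
    have "real (Suc s) powr \<beta> \<le> real (Suc p) powr \<beta>" using that \<beta>_pos by (intro powr_mono2) auto
    then show ?thesis using increment_boundD[OF assms(4), of s] by linarith
  qed
  consider "x \<in> A0" "x \<in> A1" | "x \<in> A0" "x \<notin> A1" | "x \<notin> A0" "x \<in> A1" using assms(5) by auto
  then show ?thesis
  proof cases
    case 1
    have "real r powr \<beta> + real s powr \<beta> \<le> real p0 powr \<beta> + real p1 powr \<beta>"
      using powr_add_le_of_spread[of \<beta> "real p0" "real p1" "real r" "real s"] \<beta>_pos \<beta>_less_1 sum order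
      by simp
    moreover have "\<alpha> * real s powr \<beta> \<le> real s powr \<beta>" using assms(3) by (simp add: mult_left_le_one_le assms(2))
    ultimately show ?thesis using 1 unfolding r_def s_def p0_def p1_def by simp
  next
    case 2
    then show ?thesis using step order unfolding r_def s_def p0_def p1_def by simp
  next
    case 3
    then show ?thesis using step order unfolding r_def s_def p0_def p1_def by simp
  qed
qed

lemma sum_restrict_subset:
  assumes "finite C" "A \<subseteq> C"
  shows "(\<Sum>x\<in>C. if x \<in> A then f x else 0) = (\<Sum>x\<in>A. f x)"
  using sum.inter_restrict[OF assms(1), of f A] assms(2) by (simp add: Int_absorb1)

lemma boundary_moment_Suc:
  assumes A: "A \<subseteq> hcube (Suc n)"
  defines "A0 \<equiv> slice False A" and "A1 \<equiv> slice True A"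
  shows "boundary_moment (Suc n) A
    = (\<Sum>x\<in>A0. real ((if x \<in> A1 then 0 else 1) + card (cube_nbrs n x - A0)) powr \<beta>)
    + (\<Sum>x\<in>A1. real ((if x \<in> A0 then 0 else 1) + card (cube_nbrs n x - A1)) powr \<beta>)"
    (is "_ = ?rhs")
proof -
  have "[] \<notin> A" "finite A" using A finite_subset[OF A finite_hcube] unfolding hcube_def by auto
  then have "boundary_moment (Suc n) A
      = (\<Sum>x\<in>A0. real (card (cube_nbrs (Suc n) (False # x) - A)) powr \<beta>)
        + (\<Sum>x\<in>A1. real (card (cube_nbrs (Suc n) (True # x) - A)) powr \<beta>)"
    unfolding boundary_moment_def A0_def A1_def by (intro sum_split_head)
  also have "\<dots> = ?rhs"
    using slice_subset_hcube[OF A, of False] slice_subset_hcube[OF A, of True] unfolding A0_def A1_def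
    by (intro arg_cong2[where f = "(+)"] sum.cong refl) (auto simp: card_cube_nbrs_Cons_diff hcube_def)
  finally show ?thesis .
qed

lemma boundary_moment_Suc_ge:
  assumes A: "A \<subseteq> hcube (Suc n)" and \<alpha>: "0 \<le> \<alpha>" "\<alpha> \<le> 1" "increment_bound \<alpha> \<gamma>"
  defines "B \<equiv> slice False A \<inter> slice True A" and "C \<equiv> slice False A \<union> slice True A"
  shows "boundary_moment n B + \<alpha> * boundary_moment n C + \<gamma> * (real (card C) - real (card B))
         \<le> boundary_moment (Suc n) A"
proof -
  define A0 where "A0 = slice False A"
  define A1 where "A1 = slice True A"
  define G where "G x X Y = real ((if x \<in> Y then 0 else 1) + card (cube_nbrs n x - X)) powr \<beta>" for x X Y
  define h where "h x X = real (card (cube_nbrs n x - X)) powr \<beta>" for x X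
  have BC: "B \<subseteq> C" "A0 \<subseteq> C" "A1 \<subseteq> C" "finite C"
    using slice_subset_hcube[OF A] finite_hcube unfolding A0_def A1_def B_def C_def
    by (auto intro: finite_subset)
  have "boundary_moment (Suc n) A = (\<Sum>x\<in>A0. G x A0 A1) + (\<Sum>x\<in>A1. G x A1 A0)"
    unfolding boundary_moment_Suc[OF A] A0_def A1_def G_def ..
  also have "\<dots> = (\<Sum>x\<in>C. (if x \<in> A0 then G x A0 A1 else 0) + (if x \<in> A1 then G x A1 A0 else 0))"
    by (simp only: sum.distrib sum_restrict_subset BC)
  also have "\<dots> \<ge> (\<Sum>x\<in>C. (if x \<in> B then h x B else 0) + \<alpha> * h x C + (if x \<in> B then 0 else \<gamma>))"
    using split_contribution_ge[OF finite_cube_nbrs \<alpha>] unfolding A0_def A1_def B_def C_def G_def h_def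
    by (intro sum_mono) simp
  also have "(\<Sum>x\<in>C. (if x \<in> B then h x B else 0) + \<alpha> * h x C + (if x \<in> B then 0 else \<gamma>))
      = boundary_moment n B + \<alpha> * boundary_moment n C + \<gamma> * (real (card C) - real (card B))"
  proof -
    have "(\<Sum>x\<in>C. if x \<in> B then 0 else \<gamma>) = (\<Sum>x\<in>C. if x \<in> C - B then \<gamma> else 0)"
      by (rule sum.cong) auto
    also have "\<dots> = \<gamma> * real (card (C - B))" using BC by (subst sum_restrict_subset) auto
    also have "\<dots> = \<gamma> * (real (card C) - real (card B))"
      using BC by (simp add: card_Diff_subset finite_subset card_mono of_nat_diff)
    finally show ?thesis
      using BC unfolding boundary_moment_def h_def by (simp add: sum.distrib sum_distrib_left sum_restrict_subset)
  qed
  finally show ?thesis .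
qed

lemma boundary_moment_lower_bound:
  "A \<subseteq> hcube n \<Longrightarrow> 2 * real (card A) * (2 ^ n - real (card A)) \<le> 2 ^ n * boundary_moment n A"
proof (induction n arbitrary: A)
  case 0
  then have "A = {} \<or> A = {[]}" unfolding hcube_def by auto
  then show ?case by (auto simp: boundary_moment_def)
next
  case (Suc n A)
  define B where "B = slice False A \<inter> slice True A"
  define C where "C = slice False A \<union> slice True A"
  define M :: real where "M = 2 ^ n"
  define b where "b = real (card B)"
  define c where "c = real (card C)"
  have sl: "slice False A \<subseteq> hcube n" "slice True A \<subseteq> hcube n"
    using slice_subset_hcube[OF Suc.prems] by auto
  then have fin: "finite (slice False A)" "finite (slice True A)"
    using finite_hcube by (auto intro: finite_subset)
  have BC: "B \<subseteq> C" "C \<subseteq> hcube n" using sl unfolding B_def C_def by auto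
  have "card A = card (slice False A) + card (slice True A)"
    by (rule card_eq_card_slices[OF Suc.prems])
  also have "\<dots> = card C + card B"
    unfolding B_def C_def using card_Un_Int[OF fin] .
  finally have card_A: "real (card A) = b + c" unfolding b_def c_def by simp
  have "b \<le> c" "c \<le> M"
    using card_mono[OF finite_subset[OF BC(2) finite_hcube] BC(1)] card_mono[OF finite_hcube BC(2)]
    unfolding b_def c_def M_def by (simp_all add: card_hcube)
  then obtain \<alpha> \<gamma> where \<alpha>: "0 \<le> \<alpha>" "\<alpha> \<le> 1" "increment_bound \<alpha> \<gamma>"
    and split: "(b + c) * (2 * M - b - c) \<le> 2 * b * (M - b) + \<alpha> * (2 * c * (M - c)) + \<gamma> * M * (c - b)"
    using ex_increment_bound_split[of b c M] unfolding b_def M_def by auto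
  have IH: "2 * b * (M - b) \<le> M * boundary_moment n B" "2 * c * (M - c) \<le> M * boundary_moment n C"
    using Suc.IH BC unfolding b_def c_def M_def by auto
  have "\<alpha> * (2 * c * (M - c)) \<le> \<alpha> * (M * boundary_moment n C)" by (rule mult_left_mono[OF IH(2) \<alpha>(1)])
  then have "(b + c) * (2 * M - b - c)
      \<le> M * boundary_moment n B + \<alpha> * (M * boundary_moment n C) + \<gamma> * M * (c - b)"
    using split IH(1) by linarith
  also have "\<dots> = M * (boundary_moment n B + \<alpha> * boundary_moment n C + \<gamma> * (c - b))"
    by (simp add: algebra_simps)
  also have "\<dots> \<le> M * boundary_moment (Suc n) A"
    using boundary_moment_Suc_ge[OF Suc.prems \<alpha>] unfolding B_def C_def b_def c_def M_def
    by (intro mult_left_mono) auto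
  finally show ?case unfolding card_A M_def by (simp add: algebra_simps)
qed

lemma uint_hfun_powr:
  assumes "A \<subseteq> hcube n"
  shows "uint n (\<lambda>x. real (hfun n A x) powr \<beta>) = boundary_moment n A / 2 ^ n"
proof -
  have "hdeg n (hcube n - A) x = card (cube_nbrs n x - A)" for x
    unfolding hdeg_def cube_nbrs_def by (rule arg_cong[where f = card]) auto
  then have "(\<Sum>x\<in>hcube n. real (hfun n A x) powr \<beta>)
      = (\<Sum>x\<in>hcube n. if x \<in> A then real (card (cube_nbrs n x - A)) powr \<beta> else 0)"
    unfolding hfun_def by (intro sum.cong) auto
  also have "\<dots> = boundary_moment n A"
    unfolding boundary_moment_def using finite_hcube assms by (rule sum_restrict_subset)
  finally show ?thesis unfolding uint_def by simp
qed

theorem theorem1p1: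
  fixes n :: nat and A :: "bool list set"
  assumes "n \<ge> 1" and "A \<subseteq> hcube n"
  shows "uint n (\<lambda>x. real (hfun n A x) powr (log 2 (3/2)))
           \<ge> 2 * umeas n A * (1 - umeas n A)"
proof -
  define N :: real where "N = 2 ^ n"
  have N: "0 < N" unfolding N_def by simp
  have "2 * umeas n A * (1 - umeas n A) = 2 * real (card A) * (N - real (card A)) / N\<^sup>2"
    unfolding umeas_def N_def[symmetric] using N by (simp add: field_simps power2_eq_square)
  also have "\<dots> \<le> N * boundary_moment n A / N\<^sup>2"
    using boundary_moment_lower_bound[OF assms(2)] unfolding N_def by (intro divide_right_mono) auto
  also have "\<dots> = uint n (\<lambda>x. real (hfun n A x) powr (log 2 (3/2)))"
    using uint_hfun_powr[OF assms(2)] N unfolding N_def \<beta>_def by (simp add: power2_eq_square)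
  finally show ?thesis .
qed

end
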